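(* Let $V$ be a finite dimensional normed vector space and let $(V,H_i,L_i)$ be holonomic spaces such that the family $\{H_i\}$ is of finite representation type and the holonomic metrics $d_{L_i}$ converge uniformly on compact sets to a semi-metric $d_\infty$ on $V$. Then there exists a closed subgroup $G\le O(V)$ such that for all $u,v\in V$, $d_\infty(u,v)=0$ if and only if $v=gu$ for some $g\in G$.
   Context: $O(V)$ is the group of norm-preserving linear maps of $V$. A group-norm on $H$ is $L:H\to\mathbb{R}$ with $L(a)\ge0$, $L(a)=0$ iff $a=e$, $L(a^{-1})=L(a)$, $L(ab)\le L(a)+L(b)$. A holonomic space is $(V,H,L)$ with $H\le O(V)$, $L$ a group-norm, such that for every $u\in V$ there is $R>0$ with $\|v-w\|^2-\|av-w\|^2\le L(a)^2$ for all $a\in H$ and $\|u-v\|,\|u-w\|<R$; its holonomic metric is $d_L(u,v)=\inf_{a\in H}\sqrt{L(a)^2+\|au-v\|^2}$. A family $\{H_i\}$ of subgroups of $O(V)$ is of finite representation type if there are finitely many subgroups $K_1,\dots,K_n\le O(V)$ such that each $H_i$ equals $\phi^{-1}K_j\phi$ for some $j$ and some $\phi\in O(V)$. *)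

theory Defs
  imports "HOL-Analysis.Analysis"
begin

definition fin_dim_space :: "'a::real_normed_vector itself \<Rightarrow> bool" where
  "fin_dim_space _ \<longleftrightarrow> (\<exists>B::'a set. finite B \<and> span B = UNIV)"

definition orth_maps :: "('a::real_normed_vector \<Rightarrow> 'a) set" where
  "orth_maps = {f. linear f \<and> (\<forall>x. norm (f x) = norm x)}"

definition subgroup_O :: "('a::real_normed_vector \<Rightarrow> 'a) set \<Rightarrow> bool" where
  "subgroup_O H \<longleftrightarrow> H \<subseteq> orth_maps \<and> id \<in> H \<and>
     (\<forall>a\<in>H. \<forall>b\<in>H. a \<circ> b \<in> H) \<and> (\<forall>a\<in>H. inv a \<in> H)"

definition group_norm :: "('a \<Rightarrow> 'a) set \<Rightarrow> (('a \<Rightarrow> 'a) \<Rightarrow> real) \<Rightarrow> bool" where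
  "group_norm H L \<longleftrightarrow>
     (\<forall>a\<in>H. L a \<ge> 0) \<and> (\<forall>a\<in>H. L a = 0 \<longleftrightarrow> a = id) \<and>
     (\<forall>a\<in>H. L (inv a) = L a) \<and> (\<forall>a\<in>H. \<forall>b\<in>H. L (a \<circ> b) \<le> L a + L b)"

definition holonomic_space :: "('a::real_normed_vector \<Rightarrow> 'a) set \<Rightarrow> (('a \<Rightarrow> 'a) \<Rightarrow> real) \<Rightarrow> bool" where
  "holonomic_space H L \<longleftrightarrow> subgroup_O H \<and> group_norm H L \<and>
     (\<forall>u. \<exists>R>0. \<forall>a\<in>H. \<forall>v w. norm (u - v) < R \<and> norm (u - w) < R \<longrightarrow>
         (norm (v - w))\<^sup>2 - (norm (a v - w))\<^sup>2 \<le> (L a)\<^sup>2)"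

definition holonomic_metric :: "('a::real_normed_vector \<Rightarrow> 'a) set \<Rightarrow> (('a \<Rightarrow> 'a) \<Rightarrow> real) \<Rightarrow> 'a \<Rightarrow> 'a \<Rightarrow> real" where
  "holonomic_metric H L u v = (INF a\<in>H. sqrt ((L a)\<^sup>2 + (norm (a u - v))\<^sup>2))"

definition finite_rep_type :: "'i set \<Rightarrow> ('i \<Rightarrow> ('a::real_normed_vector \<Rightarrow> 'a) set) \<Rightarrow> bool" where
  "finite_rep_type I Hs \<longleftrightarrow> (\<exists>Ks. finite Ks \<and> (\<forall>K\<in>Ks. subgroup_O K) \<and>
     (\<forall>i\<in>I. \<exists>K\<in>Ks. \<exists>\<phi>\<in>orth_maps. Hs i = (\<lambda>k. inv \<phi> \<circ> k \<circ> \<phi>) ` K))"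

definition semi_metric :: "('a \<Rightarrow> 'a \<Rightarrow> real) \<Rightarrow> bool" where
  "semi_metric d \<longleftrightarrow> (\<forall>u v. d u v \<ge> 0) \<and> (\<forall>u. d u u = 0) \<and> (\<forall>u v. d u v = d v u)"

end

theory Submission
  imports Defs
begin

(* The group asked for is
     G = {g in O(V). d u (g u) = 0 for all u},
   the isometries moving no point in the limit semi-metric.  The proof needs
   only pointwise convergence, the subgroup and group-norm axioms and finite
   dimension. *)

(* A set whose intersections with all closed balls about 0 are compact is closed:
   a point of the closure is already in the closure of one such compact piece. *)
lemma closed_if_compact_Int_cball:
  fixes S :: "'a::real_normed_vector set"
  assumes "\<And>e. compact (S \<inter> cball 0 e)"
  shows "closed S"
proof -
  have "x \<in> S" if x: "x \<in> closure S" for x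
  proof -
    have "x \<in> ball 0 (norm x + 1) \<inter> closure S" using x by simp
    also have "\<dots> \<subseteq> closure (ball 0 (norm x + 1) \<inter> S)"
      by (rule open_Int_closure_subset) simp
    also have "\<dots> \<subseteq> closure (S \<inter> cball 0 (norm x + 1))"
      by (intro closure_mono) auto
    also have "\<dots> = S \<inter> cball 0 (norm x + 1)"
      using assms compact_imp_closed closure_closed by blast
    finally show ?thesis by simp
  qed
  then show ?thesis using closure_subset_eq by blast
qed

lemma subspace_transversal_lower_bound:
  fixes S :: "'a::real_normed_vector set"
  assumes "subspace S" "closed S" "b \<notin> S"
  obtains \<delta> where "\<delta> > 0" "\<And>y t. y \<in> S \<Longrightarrow> \<bar>t\<bar> * \<delta> \<le> norm (y + t *\<^sub>R b)"
proof
  show "infdist b S > 0"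
    using infdist_pos_not_in_closed assms subspace_0 by blast
  fix y t assume y: "y \<in> S"
  show "\<bar>t\<bar> * infdist b S \<le> norm (y + t *\<^sub>R b)"
  proof (cases "t = 0")
    case False
    have "- ((1/t) *\<^sub>R y) \<in> S" using y assms(1) by (simp add: subspace_neg subspace_scale)
    then have "infdist b S \<le> norm (b + (1/t) *\<^sub>R y)"
      using infdist_le by (fastforce simp: dist_norm)
    then have "\<bar>t\<bar> * infdist b S \<le> norm (t *\<^sub>R (b + (1/t) *\<^sub>R y))"
      by (simp add: mult_left_mono)
    also have "t *\<^sub>R (b + (1/t) *\<^sub>R y) = y + t *\<^sub>R b"
      using False by (simp add: algebra_simps)
    finally show ?thesis .
  qed simp
qed

(* Adding a vector b outside span B,
   the previous lemma bounds the b-coordinate of a point of norm at most e, so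
   the new ball is the continuous image of a compact ball of span B times an
   interval, intersected with a closed ball. *)
lemma compact_span_Int_cball:
  fixes B :: "'a::real_normed_vector set"
  assumes "finite B"
  shows "compact (span B \<inter> cball 0 e)"
  using assms
proof (induction B arbitrary: e rule: finite_induct)
  case empty
  have "span {} \<inter> cball (0::'a) e \<subseteq> {0}" by auto
  then show ?case using finite_subset finite_imp_compact by blast
next
  case (insert b B)
  show ?case
  proof (cases "b \<in> span B")
    case True
    then show ?thesis using insert.IH span_redundant by metis
  next
    case False
    have "closed (span B)" by (rule closed_if_compact_Int_cball[OF insert.IH])
    then obtain \<delta> where \<delta>: "\<delta> > 0" "\<And>y t. y \<in> span B \<Longrightarrow> \<bar>t\<bar> * \<delta> \<le> norm (y + t *\<^sub>R b)"
      using subspace_transversal_lower_bound False subspace_span by blast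
    define T where "T = e / \<delta>"
    define K where "K = (\<lambda>(y, t). y + t *\<^sub>R b) ` ((span B \<inter> cball 0 (e + T * norm b)) \<times> {-T..T})"
    have "compact K" unfolding K_def
      by (intro compact_continuous_image compact_Times insert.IH compact_Icc)
         (auto intro!: continuous_intros simp: case_prod_unfold)
    moreover have "span (insert b B) \<inter> cball 0 e = K \<inter> cball 0 e"
    proof (intro equalityI subsetI)
      fix x assume x: "x \<in> span (insert b B) \<inter> cball 0 e"
      then obtain t where y: "x - t *\<^sub>R b \<in> span B" unfolding span_insert by auto
      have nx: "norm x \<le> e" using x by auto
      have "\<bar>t\<bar> * \<delta> \<le> e" using \<delta>(2)[OF y, of t] nx by simp
      then have tT: "\<bar>t\<bar> \<le> T" unfolding T_def using \<delta>(1) by (simp add: pos_le_divide_eq)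
      have "norm (x - t *\<^sub>R b) \<le> norm x + \<bar>t\<bar> * norm b"
        using norm_triangle_ineq4[of x "t *\<^sub>R b"] by simp
      also have "\<dots> \<le> e + T * norm b" using nx tT by (simp add: add_mono mult_right_mono)
      finally have "(x - t *\<^sub>R b, t) \<in> (span B \<inter> cball 0 (e + T * norm b)) \<times> {-T..T}"
        using y tT by auto
      then show "x \<in> K \<inter> cball 0 e" unfolding K_def using x by force
    next
      fix x assume "x \<in> K \<inter> cball 0 e"
      then obtain y t where y: "y \<in> span B" and x: "x = y + t *\<^sub>R b" "x \<in> cball 0 e"
        unfolding K_def by auto
      have "y \<in> span (insert b B)" using y span_mono[of B "insert b B"] by blast
      then show "x \<in> span (insert b B) \<inter> cball 0 e"
        using x by (simp add: span_add span_scale span_base)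
    qed
    ultimately show ?thesis by (simp add: compact_Int_closed)
  qed
qed

lemma tendsto_fun_iff_pointwise:
  fixes f :: "'i \<Rightarrow> 'a \<Rightarrow> 'b::topological_space"
  shows "(f \<longlongrightarrow> g) F \<longleftrightarrow> (\<forall>x. ((\<lambda>i. f i x) \<longlongrightarrow> g x) F)"
  using limitin_componentwise[of "\<lambda>_. euclidean" UNIV f g F]
  by (simp add: euclidean_product_topology)

lemma fin_dim_basis:
  assumes "fin_dim_space TYPE('a)"
  obtains B :: "'a::real_normed_vector set" where "finite B" "independent B" "span B = UNIV"
proof -
  obtain B0 :: "'a set" where B0: "finite B0" "span B0 = UNIV"
    using assms unfolding fin_dim_space_def by blast
  obtain B where B: "B \<subseteq> B0" "independent B" "B0 \<subseteq> span B"
    using maximal_independent_subset by blast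
  have "span B = UNIV" using B(3) B0(2) by (metis span_minimal subspace_span top.extremum_uniqueI)
  then show ?thesis using that B finite_subset B0(1) by blast
qed

lemma fin_dim_compact_cball:
  assumes "fin_dim_space TYPE('a::real_normed_vector)"
  shows "compact (cball (0::'a) e)"
proof -
  obtain B :: "'a set" where "finite B" "span B = UNIV"
    using assms unfolding fin_dim_space_def by blast
  then show ?thesis using compact_span_Int_cball[of B e] by simp
qed

lemma fin_dim_convergent_subseq:
  fixes x :: "nat \<Rightarrow> 's \<Rightarrow> 'a::real_normed_vector"
  assumes "fin_dim_space TYPE('a)" "finite S" "\<And>k s. s \<in> S \<Longrightarrow> norm (x k s) \<le> e s"
  shows "\<exists>r l. strict_mono r \<and> (\<forall>s\<in>S. (\<lambda>k. x (r k) s) \<longlonglongrightarrow> l s)"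
  using assms(2,3)
proof (induction S rule: finite_induct)
  case empty
  show ?case using strict_mono_id by blast
next
  case (insert s S)
  then obtain r l where r: "strict_mono r" "\<forall>s\<in>S. (\<lambda>k. x (r k) s) \<longlonglongrightarrow> l s" by auto
  have "seq_compact (cball (0::'a) (e s))"
    by (rule compact_imp_seq_compact[OF fin_dim_compact_cball[OF assms(1)]])
  moreover have "\<And>k. x (r k) s \<in> cball 0 (e s)" using insert.prems by simp
  ultimately obtain l' r' where r': "strict_mono r'" "((\<lambda>k. x (r k) s) \<circ> r') \<longlonglongrightarrow> l'"
    unfolding seq_compact_def by metis
  have "\<forall>s'\<in>insert s S. (\<lambda>k. x ((r \<circ> r') k) s') \<longlonglongrightarrow> (l(s := l')) s'"
  proof
    fix s' assume "s' \<in> insert s S"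
    then consider "s' = s" | "s' \<noteq> s" "s' \<in> S" by blast
    then show "(\<lambda>k. x ((r \<circ> r') k) s') \<longlonglongrightarrow> (l(s := l')) s'"
    proof cases
      case 1
      then show ?thesis using r'(2) by (simp add: o_def)
    next
      case 2
      then show ?thesis using LIMSEQ_subseq_LIMSEQ[OF r(2)[rule_format] r'(1)] by (simp add: o_def)
    qed
  qed
  then show ?case using strict_mono_o[OF r(1) r'(1)] by blast
qed

lemma orth_mapsD:
  assumes "g \<in> orth_maps"
  shows "linear g" "norm (g x) = norm x"
  using assms unfolding orth_maps_def by auto

lemma id_orth_maps: "id \<in> orth_maps"
  unfolding orth_maps_def by (simp add: linear_id)

lemma comp_orth_maps: "a \<in> orth_maps \<Longrightarrow> b \<in> orth_maps \<Longrightarrow> a \<circ> b \<in> orth_maps"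
  unfolding orth_maps_def by (auto intro: linear_compose)

(* O(V) is closed in the topology of pointwise convergence, being cut out by
   equations between continuous evaluation maps. *)
lemma closed_orth_maps: "closed (orth_maps :: ('a::real_normed_vector \<Rightarrow> 'a) set)"
proof -
  have eq: "(orth_maps :: ('a \<Rightarrow> 'a) set) =
      (\<Inter>x. \<Inter>y. {f. f (x + y) = f x + f y}) \<inter> (\<Inter>c. \<Inter>x. {f. f (c *\<^sub>R x) = c *\<^sub>R f x})
      \<inter> (\<Inter>x. {f. norm (f x) = norm x})"
    unfolding orth_maps_def linear_iff by auto
  have evaluation: "\<And>x. continuous_on UNIV (\<lambda>f::'a \<Rightarrow> 'a. f x)" by simp
  show ?thesis unfolding eq
    by (intro closed_Int closed_INT ballI closed_Collect_eq continuous_intros evaluation)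
qed

(* In finite dimension an isometric linear map is bijective (injective, hence
   surjective) and its inverse again lies in O(V). *)
lemma orth_maps_inv:
  assumes "fin_dim_space TYPE('a::real_normed_vector)" "g \<in> (orth_maps :: ('a \<Rightarrow> 'a) set)"
  shows "bij g" "inv g \<in> orth_maps"
proof -
  obtain B :: "'a set" where B: "finite B" "independent B" "span B = UNIV"
    using fin_dim_basis[OF assms(1)] by blast
  interpret fd: finite_dimensional_vector_space "scaleR :: real \<Rightarrow> 'a \<Rightarrow> 'a" B
    rewrites "module.dependent (*\<^sub>R) = dependent"
    and "module.span (*\<^sub>R) = span"
    and "Vector_Spaces.linear (*\<^sub>R) (*\<^sub>R) = linear"
    using B by unfold_locales (auto simp: dependent_raw_def span_raw_def linear_def real_scaleR_def[abs_def])
  note g = orth_mapsD[OF assms(2)]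
  have "inj g"
  proof (rule injI)
    fix x y assume "g x = g y"
    then have "norm (g (x - y)) = 0" using g(1) by (simp add: linear_diff)
    then show "x = y" using g(2) by simp
  qed
  moreover have "surj g" using fd.linear_inj_imp_surj[OF g(1) \<open>inj g\<close>] .
  ultimately show "bij g" by (simp add: bij_def)
  have "linear (inv g)" using fd.inj_linear_imp_inv_linear[OF g(1) \<open>inj g\<close>] .
  moreover have "norm (inv g x) = norm x" for x
    using g(2)[of "inv g x"] \<open>surj g\<close> by (simp add: surj_f_inv_f)
  ultimately show "inv g \<in> orth_maps" unfolding orth_maps_def by auto
qed

(* It suffices to converge on a finite
   spanning set; linearity extends the convergence, and closedness of O(V)
   puts the limit back into O(V). *)
lemma orth_maps_convergent_subseq:
  fixes a :: "nat \<Rightarrow> 'a::real_normed_vector \<Rightarrow> 'a"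
  assumes "fin_dim_space TYPE('a)" "\<And>k. a k \<in> orth_maps"
  obtains g r where "g \<in> orth_maps" "strict_mono r" "\<And>w. (\<lambda>k. a (r k) w) \<longlonglongrightarrow> g w"
proof -
  obtain B :: "'a set" where B: "finite B" "span B = UNIV"
    using assms(1) unfolding fin_dim_space_def by blast
  have "\<And>k b. norm (a k b) \<le> norm b" using orth_mapsD(2)[OF assms(2)] by simp
  then obtain r l where r: "strict_mono r" "\<forall>b\<in>B. (\<lambda>k. a (r k) b) \<longlonglongrightarrow> l b"
    using fin_dim_convergent_subseq[OF assms(1) B(1), of a norm] by blast
  have "convergent (\<lambda>k. a (r k) w)" for w
  proof -
    obtain c where w: "w = (\<Sum>b\<in>B. c b *\<^sub>R b)" using span_finite[OF B(1)] B(2) by blast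
    have "(\<lambda>k. a (r k) w) = (\<lambda>k. \<Sum>b\<in>B. c b *\<^sub>R a (r k) b)"
      unfolding w using orth_mapsD(1)[OF assms(2)] by (simp add: linear_sum linear_scale)
    moreover have "(\<lambda>k. \<Sum>b\<in>B. c b *\<^sub>R a (r k) b) \<longlonglongrightarrow> (\<Sum>b\<in>B. c b *\<^sub>R l b)"
      using r(2) by (intro tendsto_intros) auto
    ultimately show ?thesis unfolding convergent_def by auto
  qed
  then have lim: "(\<lambda>k. a (r k) w) \<longlonglongrightarrow> lim (\<lambda>k. a (r k) w)" for w
    by (simp add: convergent_LIMSEQ_iff)
  then have "(\<lambda>k. a (r k)) \<longlonglongrightarrow> (\<lambda>w. lim (\<lambda>k. a (r k) w))"
    unfolding tendsto_fun_iff_pointwise by blast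
  then have "(\<lambda>w. lim (\<lambda>k. a (r k) w)) \<in> orth_maps"
    by (rule closed_sequentially[OF closed_orth_maps assms(2)])
  then show ?thesis using r(1) lim by (rule that)
qed

lemma holonomic_spaceD:
  assumes "holonomic_space H L"
  shows "id \<in> H" "\<And>a. a \<in> H \<Longrightarrow> a \<in> orth_maps" "\<And>a b. a \<in> H \<Longrightarrow> b \<in> H \<Longrightarrow> a \<circ> b \<in> H"
    "\<And>a. a \<in> H \<Longrightarrow> 0 \<le> L a" "L id = 0" "\<And>a b. a \<in> H \<Longrightarrow> b \<in> H \<Longrightarrow> L (a \<circ> b) \<le> L a + L b"
  using assms unfolding holonomic_space_def subgroup_O_def group_norm_def by auto

lemma holonomic_metric_le:
  assumes "a \<in> H"
  shows "holonomic_metric H L u v \<le> sqrt ((L a)\<^sup>2 + (norm (a u - v))\<^sup>2)"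
  unfolding holonomic_metric_def by (rule cINF_lower[OF bdd_belowI2[of _ 0] assms]) simp

lemma holonomic_metric_greatest:
  assumes "holonomic_space H L" "\<And>a. a \<in> H \<Longrightarrow> m \<le> sqrt ((L a)\<^sup>2 + (norm (a u - v))\<^sup>2)"
  shows "m \<le> holonomic_metric H L u v"
  unfolding holonomic_metric_def
  by (rule cINF_greatest) (use assms holonomic_spaceD(1)[OF assms(1)] in auto)

lemma holonomic_metric_approx:
  assumes "holonomic_space H L" "\<epsilon> > 0"
  obtains a where "a \<in> H" "sqrt ((L a)\<^sup>2 + (norm (a u - v))\<^sup>2) < holonomic_metric H L u v + \<epsilon>"
proof -
  have "\<not> holonomic_metric H L u v + \<epsilon> \<le> holonomic_metric H L u v" using assms(2) by simp
  then show ?thesis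
    using holonomic_metric_greatest[OF assms(1)] that by (meson not_less)
qed

(* Taking a = id shows that d_L is dominated by the norm distance. *)
lemma holonomic_metric_le_norm:
  assumes "holonomic_space H L"
  shows "holonomic_metric H L u v \<le> norm (u - v)"
  using holonomic_metric_le[OF holonomic_spaceD(1)[OF assms], of L u v] holonomic_spaceD(5)[OF assms]
  by simp

(* Triangle inequality for d_L: compose any a (moving u to v) and b
   (from v to w); subadditivity of L, isometry of b and Minkowski's inequality
   in the plane bound the cost of b o a by the sum of the two costs. *)
lemma holonomic_metric_triangle:
  assumes hs: "holonomic_space H L"
  shows "holonomic_metric H L u w \<le> holonomic_metric H L u v + holonomic_metric H L v w"
proof -
  let ?f = "\<lambda>a. sqrt ((L a)\<^sup>2 + (norm (a u - v))\<^sup>2)"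
  let ?g = "\<lambda>b. sqrt ((L b)\<^sup>2 + (norm (b v - w))\<^sup>2)"
  have composite: "holonomic_metric H L u w \<le> ?f a + ?g b" if a: "a \<in> H" and b: "b \<in> H" for a b
  proof -
    have ba: "b \<circ> a \<in> H" using holonomic_spaceD(3)[OF hs b a] .
    note b_orth = orth_mapsD[OF holonomic_spaceD(2)[OF hs b]]
    have "norm (b (a u) - w) \<le> norm (b (a u) - b v) + norm (b v - w)"
      using norm_triangle_ineq[of "b (a u) - b v" "b v - w"] by simp
    also have "b (a u) - b v = b (a u - v)" using b_orth(1) by (simp add: linear_diff)
    finally have "norm (b (a u) - w) \<le> norm (a u - v) + norm (b v - w)" using b_orth(2) by simp
    moreover have "L (b \<circ> a) \<le> L a + L b" using holonomic_spaceD(6)[OF hs b a] by simp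
    ultimately have "sqrt ((L (b \<circ> a))\<^sup>2 + (norm ((b \<circ> a) u - w))\<^sup>2)
        \<le> sqrt ((L a + L b)\<^sup>2 + (norm (a u - v) + norm (b v - w))\<^sup>2)"
      using holonomic_spaceD(4)[OF hs ba]
      by (intro real_sqrt_le_mono add_mono power_mono) auto
    also have "\<dots> \<le> ?f a + ?g b" by (rule real_sqrt_sum_squares_triangle_ineq)
    finally show ?thesis using holonomic_metric_le[OF ba, of L u w] by linarith
  qed
  have "holonomic_metric H L u w - ?g b \<le> holonomic_metric H L u v" if "b \<in> H" for b
    by (rule holonomic_metric_greatest[OF hs]) (use composite that in force)
  then have "holonomic_metric H L u w - holonomic_metric H L u v \<le> holonomic_metric H L v w"
    by (intro holonomic_metric_greatest[OF hs]) force
  then show ?thesis by simp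
qed

definition null_displacement_group :: "('a::real_normed_vector \<Rightarrow> 'a \<Rightarrow> real) \<Rightarrow> ('a \<Rightarrow> 'a) set" where
  "null_displacement_group d = {g \<in> orth_maps. \<forall>u. d u (g u) = 0}"

(* For a semi-metric satisfying the triangle inequality it is a subgroup of O(V);
   closure under inverses uses finite dimension via orth_maps_inv. *)
lemma subgroup_null_displacement_group:
  assumes "fin_dim_space TYPE('a::real_normed_vector)" "semi_metric d"
    and triangle: "\<And>u v w. d u w \<le> d u v + d v w"
  shows "subgroup_O (null_displacement_group (d :: 'a \<Rightarrow> 'a \<Rightarrow> real))"
  unfolding subgroup_O_def
proof (intro conjI ballI subsetI)
  have nonneg: "\<And>u v. 0 \<le> d u v" and diag: "\<And>u. d u u = 0" and sym: "\<And>u v. d u v = d v u"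
    using assms(2) unfolding semi_metric_def by auto
  show "g \<in> orth_maps" if "g \<in> null_displacement_group d" for g
    using that unfolding null_displacement_group_def by simp
  show "id \<in> null_displacement_group d"
    unfolding null_displacement_group_def using id_orth_maps diag by simp
  fix a assume a: "a \<in> null_displacement_group d"
  then have a_orth: "a \<in> orth_maps" and a_null: "\<And>u. d u (a u) = 0"
    unfolding null_displacement_group_def by auto
  show "a \<circ> b \<in> null_displacement_group d" if b: "b \<in> null_displacement_group d" for b
  proof -
    have b_orth: "b \<in> orth_maps" and b_null: "\<And>u. d u (b u) = 0"
      using b unfolding null_displacement_group_def by auto
    have "d u (a (b u)) = 0" for u
      using triangle[of u "a (b u)" "b u"] nonneg[of u "a (b u)"] a_null[of "b u"] b_null[of u] by linarith
    then show ?thesis unfolding null_displacement_group_def using comp_orth_maps[OF a_orth b_orth] by simp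
  qed
  have "d u (inv a u) = 0" for u
    using a_null[of "inv a u"] sym bij_inv_eq_iff[OF orth_maps_inv(1)[OF assms(1) a_orth]] by metis
  then show "inv a \<in> null_displacement_group d"
    unfolding null_displacement_group_def using orth_maps_inv(2)[OF assms(1) a_orth] by simp
qed

lemma closed_null_displacement_group:
  assumes "\<And>u. continuous_on UNIV (d u)"
  shows "closed (null_displacement_group d)"
proof -
  have "null_displacement_group d = orth_maps \<inter> (\<Inter>u. {g. d u (g u) = 0})"
    unfolding null_displacement_group_def by auto
  moreover have "closed {g::'a \<Rightarrow> 'a. d u (g u) = 0}" for u
    by (intro closed_Collect_eq continuous_on_compose2[OF assms continuous_on_product_coordinates]
        continuous_on_const) auto
  ultimately show ?thesis by (simp add: closed_Int closed_orth_maps closed_INT)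
qed

(* A function with the triangle inequality dominated by the norm distance is
   1-Lipschitz in its second argument, hence continuous. *)
lemma continuous_on_dominated_pseudometric:
  fixes d :: "'a::real_normed_vector \<Rightarrow> 'a \<Rightarrow> real"
  assumes triangle: "\<And>u v w. d u w \<le> d u v + d v w" and le_norm: "\<And>u v. d u v \<le> norm (u - v)"
  shows "continuous_on UNIV (d u)"
proof (rule lipschitz_on_continuous_on[OF lipschitz_onI])
  show "dist (d u x) (d u y) \<le> 1 * dist x y" for x y
    using triangle[of u x y] triangle[of u y x] le_norm[of x y] le_norm[of y x]
    by (simp add: dist_real_def dist_norm norm_minus_commute abs_le_iff)
qed simp

context
  fixes Hs :: "nat \<Rightarrow> ('a::real_normed_vector \<Rightarrow> 'a) set" and Ls :: "nat \<Rightarrow> ('a \<Rightarrow> 'a) \<Rightarrow> real"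
    and d :: "'a \<Rightarrow> 'a \<Rightarrow> real"
  assumes holonomic: "\<And>i. holonomic_space (Hs i) (Ls i)"
    and pointwise: "\<And>u v. (\<lambda>i. holonomic_metric (Hs i) (Ls i) u v) \<longlonglongrightarrow> d u v"
begin

lemma limit_metric_triangle: "d u w \<le> d u v + d v w"
  by (rule LIMSEQ_le[OF pointwise tendsto_add[OF pointwise pointwise]])
     (use holonomic_metric_triangle[OF holonomic] in auto)

lemma limit_metric_le_norm: "d u v \<le> norm (u - v)"
  by (rule LIMSEQ_le[OF pointwise tendsto_const]) (use holonomic_metric_le_norm[OF holonomic] in auto)

lemma limit_metric_nonneg: "0 \<le> d u v"
  by (rule LIMSEQ_le[OF tendsto_const pointwise])
     (auto intro!: holonomic_metric_greatest[OF holonomic])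

lemma limit_metric_zero_approximants:
  assumes "d u v = 0"
  obtains a where "\<And>i. a i \<in> Hs i" "(\<lambda>i. sqrt ((Ls i (a i))\<^sup>2 + (norm (a i u - v))\<^sup>2)) \<longlonglongrightarrow> 0"
proof -
  have "\<exists>a\<in>Hs i. sqrt ((Ls i a)\<^sup>2 + (norm (a u - v))\<^sup>2)
          < holonomic_metric (Hs i) (Ls i) u v + inverse (real (Suc i))" for i
    by (rule holonomic_metric_approx[OF holonomic]) auto
  then obtain a where a: "\<And>i. a i \<in> Hs i"
    "\<And>i. sqrt ((Ls i (a i))\<^sup>2 + (norm (a i u - v))\<^sup>2)
            < holonomic_metric (Hs i) (Ls i) u v + inverse (real (Suc i))"
    by metis
  have upper: "(\<lambda>i. holonomic_metric (Hs i) (Ls i) u v + inverse (real (Suc i))) \<longlonglongrightarrow> 0"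
    using tendsto_add[OF pointwise[of u v] LIMSEQ_inverse_real_of_nat] assms by simp
  have "(\<lambda>i. sqrt ((Ls i (a i))\<^sup>2 + (norm (a i u - v))\<^sup>2)) \<longlonglongrightarrow> 0"
    by (rule tendsto_sandwich[OF always_eventually always_eventually tendsto_const upper])
       (simp, use less_imp_le[OF a(2)] in blast)
  then show ?thesis using a(1) that by blast
qed

(* Take g a pointwise limit of a subsequence of the approximants a_i:
   then a_i u tends to both v and g u, and L_i (a_i) tends to 0, so
   d_(L_i) (w, g w) <= sqrt (L_i (a_i)^2 + norm (a_i w - g w)^2) tends to 0. *)
lemma limit_metric_zero_orbit:
  assumes "fin_dim_space TYPE('a)" "d u v = 0"
  shows "\<exists>g\<in>null_displacement_group d. v = g u"
proof -
  obtain a where a: "\<And>i. a i \<in> Hs i"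
    and approx: "(\<lambda>i. sqrt ((Ls i (a i))\<^sup>2 + (norm (a i u - v))\<^sup>2)) \<longlonglongrightarrow> 0"
    by (rule limit_metric_zero_approximants[OF assms(2)]) blast
  have "\<And>i. a i \<in> orth_maps" using holonomic_spaceD(2)[OF holonomic a] .
  then obtain g r where g: "g \<in> orth_maps" and r: "strict_mono r"
    and lim: "\<And>w. (\<lambda>k. a (r k) w) \<longlonglongrightarrow> g w"
    using orth_maps_convergent_subseq[OF assms(1)] by blast
  define q where "q k = sqrt ((Ls (r k) (a (r k)))\<^sup>2 + (norm (a (r k) u - v))\<^sup>2)" for k
  have q: "q \<longlonglongrightarrow> 0"
    using LIMSEQ_subseq_LIMSEQ[OF approx r] unfolding q_def o_def .
  have norms_zero: "(\<lambda>k. Ls (r k) (a (r k))) \<longlonglongrightarrow> 0"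
    by (rule tendsto_sandwich[OF always_eventually always_eventually tendsto_const q])
       (simp_all add: q_def holonomic_spaceD(4)[OF holonomic a])
  have "(\<lambda>k. a (r k) u - v) \<longlonglongrightarrow> 0"
    by (rule Lim_null_comparison[OF _ q]) (simp add: q_def)
  then have "(\<lambda>k. a (r k) u) \<longlonglongrightarrow> v" by (rule LIM_zero_cancel)
  then have orbit: "v = g u" by (rule LIMSEQ_unique[OF _ lim[of u]])
  have "d w (g w) \<le> 0" for w
  proof (rule LIMSEQ_le[OF LIMSEQ_subseq_LIMSEQ[OF pointwise r]])
    have "(\<lambda>k. sqrt ((Ls (r k) (a (r k)))\<^sup>2 + (norm (a (r k) w - g w))\<^sup>2))
        \<longlonglongrightarrow> sqrt (0\<^sup>2 + (norm (g w - g w))\<^sup>2)"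
      by (intro tendsto_intros norms_zero lim)
    then show "(\<lambda>k. sqrt ((Ls (r k) (a (r k)))\<^sup>2 + (norm (a (r k) w - g w))\<^sup>2)) \<longlonglongrightarrow> 0"
      by simp
    show "\<exists>N. \<forall>k\<ge>N. ((\<lambda>i. holonomic_metric (Hs i) (Ls i) w (g w)) \<circ> r) k
        \<le> sqrt ((Ls (r k) (a (r k)))\<^sup>2 + (norm (a (r k) w - g w))\<^sup>2)"
      unfolding o_def by (intro exI allI impI holonomic_metric_le[OF a])
  qed
  then have "\<forall>w. d w (g w) = 0" using limit_metric_nonneg by (simp add: order_antisym)
  then have "g \<in> null_displacement_group d"
    unfolding null_displacement_group_def using g by simp
  then show ?thesis using orbit by blast
qed

end

(* Main theorem: uniform convergence on the compact sets {u, v} gives pointwise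
   convergence, after which the null displacement group of the limit is the
   required closed subgroup. *)
theorem mainTheorem15:
  fixes Hs :: "nat \<Rightarrow> ('a::real_normed_vector \<Rightarrow> 'a) set"
    and Ls :: "nat \<Rightarrow> ('a \<Rightarrow> 'a) \<Rightarrow> real"
    and dinf :: "'a \<Rightarrow> 'a \<Rightarrow> real"
  assumes "fin_dim_space TYPE('a)"
    and "\<And>i. holonomic_space (Hs i) (Ls i)"
    and "finite_rep_type UNIV Hs"
    and "semi_metric dinf"
    and "\<And>C. compact C \<Longrightarrow>
           uniform_limit (C \<times> C) (\<lambda>i (u, v). holonomic_metric (Hs i) (Ls i) u v)
             (\<lambda>(u, v). dinf u v) sequentially"
  shows "\<exists>G. subgroup_O G \<and> closed G \<and>
           (\<forall>u v. dinf u v = 0 \<longleftrightarrow> (\<exists>g\<in>G. v = g u))"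
proof -
  have pointwise: "(\<lambda>i. holonomic_metric (Hs i) (Ls i) u v) \<longlonglongrightarrow> dinf u v" for u v
    using tendsto_uniform_limitI[OF assms(5)[of "{u, v}"], of "(u, v)"] by simp
  note triangle = limit_metric_triangle[OF assms(2) pointwise]
  note le_norm = limit_metric_le_norm[OF assms(2) pointwise]
  let ?G = "null_displacement_group dinf"
  have "subgroup_O ?G"
    by (rule subgroup_null_displacement_group[OF assms(1,4) triangle])
  moreover have "closed ?G"
    by (rule closed_null_displacement_group[OF continuous_on_dominated_pseudometric[OF triangle le_norm]])
  moreover have "dinf u v = 0 \<longleftrightarrow> (\<exists>g\<in>?G. v = g u)" for u v
    using limit_metric_zero_orbit[OF assms(2) pointwise assms(1)]
    unfolding null_displacement_group_def by blast
  ultimately show ?thesis by blast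
qed

end
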